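(* Let $G$ be a finite simple connected graph. If $c_{\infty}(G)=1$ then $G$ has no hallway.
   Context: Cops and Robber with an infinitely fast robber: the game is played on a graph $G$. A set of cops first choose initial vertices (several cops may share a vertex); then the robber, knowing their positions, chooses a vertex. Then the players move in alternating rounds, cops first. In the cops' turn each cop either stays or moves to an adjacent vertex; in the robber's turn she either stays or moves along any path of $G$ starting at her current vertex that contains no vertex currently occupied by a cop. The cops win if at some point a cop moves to the vertex occupied by the robber. $c_{\infty}(G)$ is the minimum number of cops for which the cops have a strategy that guarantees a win. A block of $G$ is either a maximal 2-connected subgraph or an edge not contained in any 2-connected subgraph. The block tree $B(G)$ is the bipartite tree whose vertices are the blocks and cut vertices of $G$, a block $B$ adjacent to a cut vertex $v$ iff $v\in V(B)$. If $u$ is a cut vertex and $B$ a block containing $u$ such that some vertex of $B$ is neither $u$ nor adjacent to $u$, then $(B,u)$ is a directed hole. For distinct blocks $B,B'$ with unique $(B,B')$-path $B\,u_1\cdots u_k\,B'$ in $B(G)$, $\{B,B'\}$ is a hallway if $(B,u_1)$ and $(B',u_k)$ are both directed holes. *)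

theory Defs
  imports Main
begin

definition simple_graph :: "'a set \<Rightarrow> ('a \<Rightarrow> 'a \<Rightarrow> bool) \<Rightarrow> bool" where
  "simple_graph V E \<longleftrightarrow> finite V \<and> (\<forall>x y. E x y \<longrightarrow> x \<in> V \<and> y \<in> V)
     \<and> (\<forall>x y. E x y \<longrightarrow> E y x) \<and> (\<forall>x. \<not> E x x)"

definition connected_on :: "('a \<Rightarrow> 'a \<Rightarrow> bool) \<Rightarrow> 'a set \<Rightarrow> bool" where
  "connected_on E S \<longleftrightarrow> (\<forall>x\<in>S. \<forall>y\<in>S. (\<lambda>a b. E a b \<and> a \<in> S \<and> b \<in> S)\<^sup>*\<^sup>* x y)"

definition connected_graph :: "'a set \<Rightarrow> ('a \<Rightarrow> 'a \<Rightarrow> bool) \<Rightarrow> bool" where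
  "connected_graph V E \<longleftrightarrow> V \<noteq> {} \<and> connected_on E V"

definition cop_move :: "('a \<Rightarrow> 'a \<Rightarrow> bool) \<Rightarrow> 'a list \<Rightarrow> 'a list \<Rightarrow> bool" where
  "cop_move E C C' \<longleftrightarrow> length C' = length C \<and>
     (\<forall>i < length C. C' ! i = C ! i \<or> E (C ! i) (C' ! i))"

definition robber_move :: "('a \<Rightarrow> 'a \<Rightarrow> bool) \<Rightarrow> 'a list \<Rightarrow> 'a \<Rightarrow> 'a \<Rightarrow> bool" where
  "robber_move E C r r' \<longleftrightarrow>
     (\<lambda>a b. E a b \<and> a \<notin> set C \<and> b \<notin> set C)\<^sup>*\<^sup>* r r'"

text \<open>cop_wins_from E C r: cops at C, robber at r, robber to move; the cops can force a
  capture (least fixed point = win in finitely many rounds against every robber play).\<close>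
inductive cop_wins_from :: "('a \<Rightarrow> 'a \<Rightarrow> bool) \<Rightarrow> 'a list \<Rightarrow> 'a \<Rightarrow> bool"
  for E :: "'a \<Rightarrow> 'a \<Rightarrow> bool" where
  step: "(\<And>r'. robber_move E C r r' \<Longrightarrow>
            (\<exists>C'. cop_move E C C' \<and> (r' \<in> set C' \<or> cop_wins_from E C' r')))
         \<Longrightarrow> cop_wins_from E C r"

definition cops_win :: "'a set \<Rightarrow> ('a \<Rightarrow> 'a \<Rightarrow> bool) \<Rightarrow> nat \<Rightarrow> bool" where
  "cops_win V E k \<longleftrightarrow> (\<exists>C. length C = k \<and> set C \<subseteq> V \<and>
     (\<forall>r \<in> V - set C. \<exists>C'. cop_move E C C' \<and> (r \<in> set C' \<or> cop_wins_from E C' r)))"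

definition cop_number_inf :: "'a set \<Rightarrow> ('a \<Rightarrow> 'a \<Rightarrow> bool) \<Rightarrow> nat" where
  "cop_number_inf V E = (LEAST k. cops_win V E k)"

definition two_connected_on :: "('a \<Rightarrow> 'a \<Rightarrow> bool) \<Rightarrow> 'a set \<Rightarrow> bool" where
  "two_connected_on E S \<longleftrightarrow> finite S \<and> card S \<ge> 3 \<and> connected_on E S \<and>
     (\<forall>x\<in>S. connected_on E (S - {x}))"

text \<open>Blocks, identified with their vertex sets (a maximal 2-connected subgraph is induced).\<close>
definition is_block :: "'a set \<Rightarrow> ('a \<Rightarrow> 'a \<Rightarrow> bool) \<Rightarrow> 'a set \<Rightarrow> bool" where
  "is_block V E B \<longleftrightarrow>
     (B \<subseteq> V \<and> two_connected_on E B \<and>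
        (\<forall>S. B \<subseteq> S \<and> S \<subseteq> V \<and> two_connected_on E S \<longrightarrow> S = B))
   \<or> (\<exists>u v. B = {u, v} \<and> E u v \<and>
        \<not> (\<exists>S. S \<subseteq> V \<and> two_connected_on E S \<and> u \<in> S \<and> v \<in> S))"

definition is_cut_vertex :: "'a set \<Rightarrow> ('a \<Rightarrow> 'a \<Rightarrow> bool) \<Rightarrow> 'a \<Rightarrow> bool" where
  "is_cut_vertex V E v \<longleftrightarrow> v \<in> V \<and> \<not> connected_on E (V - {v})"

text \<open>Adjacency in the block tree; nodes are blocks (Inl) and cut vertices (Inr).\<close>
definition bt_adj :: "'a set \<Rightarrow> ('a \<Rightarrow> 'a \<Rightarrow> bool) \<Rightarrow> ('a set + 'a) \<Rightarrow> ('a set + 'a) \<Rightarrow> bool" where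
  "bt_adj V E x y \<longleftrightarrow>
     (\<exists>B v. is_block V E B \<and> is_cut_vertex V E v \<and> v \<in> B \<and>
        ((x = Inl B \<and> y = Inr v) \<or> (x = Inr v \<and> y = Inl B)))"

definition bt_path :: "'a set \<Rightarrow> ('a \<Rightarrow> 'a \<Rightarrow> bool) \<Rightarrow> ('a set + 'a) list \<Rightarrow> bool" where
  "bt_path V E p \<longleftrightarrow> p \<noteq> [] \<and> distinct p \<and>
     (\<forall>i. Suc i < length p \<longrightarrow> bt_adj V E (p ! i) (p ! Suc i))"

definition directed_hole :: "'a set \<Rightarrow> ('a \<Rightarrow> 'a \<Rightarrow> bool) \<Rightarrow> 'a set \<Rightarrow> 'a \<Rightarrow> bool" where
  "directed_hole V E B u \<longleftrightarrow> is_cut_vertex V E u \<and> is_block V E B \<and> u \<in> B \<and>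
     (\<exists>w\<in>B. w \<noteq> u \<and> \<not> E u w)"

text \<open>{B,B'} is a hallway: B, B' distinct blocks whose (unique) block-tree path
  B u_1 ... u_k B' has (B,u_1) and (B',u_k) directed holes.\<close>
definition is_hallway :: "'a set \<Rightarrow> ('a \<Rightarrow> 'a \<Rightarrow> bool) \<Rightarrow> 'a set \<Rightarrow> 'a set \<Rightarrow> bool" where
  "is_hallway V E B B' \<longleftrightarrow> is_block V E B \<and> is_block V E B' \<and> B \<noteq> B' \<and>
     (\<exists>p u1 uk. bt_path V E p \<and> hd p = Inl B \<and> last p = Inl B' \<and>
        p ! 1 = Inr u1 \<and> p ! (length p - 2) = Inr uk \<and>
        directed_hole V E B u1 \<and> directed_hole V E B' uk)"

definition has_hallway :: "'a set \<Rightarrow> ('a \<Rightarrow> 'a \<Rightarrow> bool) \<Rightarrow> bool" where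
  "has_hallway V E \<longleftrightarrow> (\<exists>B B'. is_hallway V E B B')"

end

theory Submission
  imports Defs
begin

text \<open>Let B u_1 ... u_k B' be the block-tree path of a hallway, and pick w \<in> B distinct from and
  not adjacent to u_1, and w' \<in> B' likewise for u_k. If some vertex were equal or adjacent to both
  w and w', or if a neighbour of w were one of the u_i or w', the blocks of the path could be
  closed up into a cycle; the union of such a cycle is 2-connected and contains two distinct
  blocks, contradicting their maximality. So a single cop never threatens w and w' at once, and a
  cop next to w cannot cut w off from w', since blocks stay connected after deleting a vertex.
  The robber therefore always runs to whichever of w, w' the cop cannot reach.\<close>

lemma connected_on_rtranclp:
  assumes "connected_on E S" and "x \<in> S" and "y \<in> S" and "\<forall>z\<in>S. P z"
  shows "(\<lambda>a b. E a b \<and> P a \<and> P b)\<^sup>*\<^sup>* x y"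
proof -
  have "(\<lambda>a b. E a b \<and> a \<in> S \<and> b \<in> S)\<^sup>*\<^sup>* x y" using assms(1-3) by (simp add: connected_on_def)
  then show ?thesis by (rule mono_rtranclp[rule_format, rotated]) (use assms(4) in auto)
qed

lemma rtranclp_Suc_chain:
  assumes "\<And>t. a \<le> t \<Longrightarrow> t < b \<Longrightarrow> R t (Suc t)" and "a \<le> b"
  shows "R\<^sup>*\<^sup>* a b"
  using assms(2) by (induction rule: dec_induct) (auto intro: rtranclp.rtrancl_into_rtrancl assms(1))

lemma connected_on_UN_linked:
  assumes conn: "\<And>a. a \<in> I \<Longrightarrow> connected_on E (F a)"
    and link: "\<And>a b. R a b \<Longrightarrow> a \<in> I \<and> b \<in> I \<and> F a \<inter> F b \<noteq> {}"
    and "R\<^sup>*\<^sup>* a b" and "a \<in> I" and "x \<in> F a" and "y \<in> F b"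
  shows "(\<lambda>u v. E u v \<and> u \<in> \<Union>(F ` I) \<and> v \<in> \<Union>(F ` I))\<^sup>*\<^sup>* x y"
  using \<open>R\<^sup>*\<^sup>* a b\<close> \<open>y \<in> F b\<close>
proof (induction arbitrary: y rule: rtranclp_induct)
  case base
  have "\<forall>z\<in>F a. z \<in> \<Union>(F ` I)" using \<open>a \<in> I\<close> by blast
  with conn[OF \<open>a \<in> I\<close>] \<open>x \<in> F a\<close> base show ?case by (rule connected_on_rtranclp)
next
  case (step b c)
  from link[OF step.hyps(2)] obtain q where q: "q \<in> F b" "q \<in> F c" and "c \<in> I" by auto
  have "\<forall>z\<in>F c. z \<in> \<Union>(F ` I)" using \<open>c \<in> I\<close> by blast
  with conn[OF \<open>c \<in> I\<close>] q(2) step.prems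
  have "(\<lambda>u v. E u v \<and> u \<in> \<Union>(F ` I) \<and> v \<in> \<Union>(F ` I))\<^sup>*\<^sup>* q y"
    by (rule connected_on_rtranclp)
  with step.IH[OF q(1)] show ?case by (rule rtranclp_trans)
qed

lemma connected_on_UN_cycle:
  assumes conn: "\<And>a. a < n \<Longrightarrow> connected_on E (F a)" and "i0 < n"
    and link: "\<And>a. a < n \<Longrightarrow> a \<noteq> i0 \<Longrightarrow> F a \<inter> F (Suc a mod n) \<noteq> {}"
  shows "connected_on E (\<Union>a<n. F a)"
proof -
  define R where "R a b \<longleftrightarrow> a < n \<and> b < n \<and>
    ((b = Suc a mod n \<and> a \<noteq> i0) \<or> (a = Suc b mod n \<and> b \<noteq> i0))" for a b
  have R_link: "a \<in> {..<n} \<and> b \<in> {..<n} \<and> F a \<inter> F b \<noteq> {}" if "R a b" for a b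
    using link that unfolding R_def by (auto simp: Int_commute)
  have "symp R\<^sup>*\<^sup>*" by (rule symp_rtranclp) (auto simp: R_def intro: sympI)
  have to_i0: "R\<^sup>*\<^sup>* a i0" if "a < n" for a
  proof (cases "a \<le> i0")
    case True
    show ?thesis by (rule rtranclp_Suc_chain[OF _ True]) (use \<open>i0 < n\<close> in \<open>auto simp: R_def\<close>)
  next
    case False
    have "R\<^sup>*\<^sup>* a (n - 1)" by (rule rtranclp_Suc_chain) (use False that in \<open>auto simp: R_def\<close>)
    moreover have "R (n - 1) 0" using False that unfolding R_def by auto
    moreover have "R\<^sup>*\<^sup>* 0 i0" by (rule rtranclp_Suc_chain) (use \<open>i0 < n\<close> in \<open>auto simp: R_def\<close>)
    ultimately show ?thesis by (meson rtranclp.rtrancl_into_rtrancl rtranclp_trans)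
  qed
  show ?thesis unfolding connected_on_def
  proof (intro ballI)
    fix x y assume "x \<in> (\<Union>a<n. F a)" "y \<in> (\<Union>a<n. F a)"
    then obtain a b where ab: "a < n" "x \<in> F a" "b < n" "y \<in> F b" by auto
    have "R\<^sup>*\<^sup>* a b"
      using to_i0[OF ab(1)] sympD[OF \<open>symp R\<^sup>*\<^sup>*\<close> to_i0[OF ab(3)]] by (rule rtranclp_trans)
    from connected_on_UN_linked[where I="{..<n}", OF conn R_link this _ ab(2) ab(4)] ab(1)
    show "(\<lambda>u v. E u v \<and> u \<in> (\<Union>a<n. F a) \<and> v \<in> (\<Union>a<n. F a))\<^sup>*\<^sup>* x y" by auto
  qed
qed

text \<open>Like two_connected_on, but without the lower bound on the number of vertices, so that
  single edges qualify.\<close>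
definition nonseparable_on :: "('a \<Rightarrow> 'a \<Rightarrow> bool) \<Rightarrow> 'a set \<Rightarrow> bool" where
  "nonseparable_on E S \<longleftrightarrow> connected_on E S \<and> (\<forall>x\<in>S. connected_on E (S - {x}))"

lemma nonseparable_on_connected_minus: "nonseparable_on E S \<Longrightarrow> connected_on E (S - {z})"
  by (cases "z \<in> S") (auto simp: nonseparable_on_def)

lemma nonseparable_on_UN_cycle:
  assumes "0 < n" and X: "\<And>a. a < n \<Longrightarrow> nonseparable_on E (X a)"
    and j: "\<And>a. a < n \<Longrightarrow> j a \<in> X a \<inter> X (Suc a mod n)" and "inj_on j {..<n}"
  shows "nonseparable_on E (\<Union>a<n. X a)"
  unfolding nonseparable_on_def
proof (intro conjI ballI)
  show "connected_on E (\<Union>a<n. X a)"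
    using X j \<open>0 < n\<close> by (intro connected_on_UN_cycle[where ?i0.0=0]) (auto simp: nonseparable_on_def)
  fix z
  obtain i0 where "i0 < n" and i0: "\<And>a. a < n \<Longrightarrow> a \<noteq> i0 \<Longrightarrow> j a \<noteq> z"
    using \<open>inj_on j {..<n}\<close> \<open>0 < n\<close> by (metis inj_on_contraD lessThan_iff)
  have "(\<Union>a<n. X a) - {z} = (\<Union>a<n. X a - {z})" by blast
  also have "connected_on E \<dots>"
  proof (rule connected_on_UN_cycle[OF _ \<open>i0 < n\<close>])
    show "connected_on E (X a - {z})" if "a < n" for a
      using X[OF that] by (rule nonseparable_on_connected_minus)
    show "(X a - {z}) \<inter> (X (Suc a mod n) - {z}) \<noteq> {}" if "a < n" "a \<noteq> i0" for a
      using j[OF that(1)] i0[OF that] by blast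
  qed
  finally show "connected_on E ((\<Union>a<n. X a) - {z})" .
qed

lemma nonseparable_on_edge:
  assumes "simple_graph V E" and "E a b"
  shows "nonseparable_on E {a, b}"
proof -
  have "E b a" using assms by (auto simp: simple_graph_def)
  then have "connected_on E {a, b}"
    using \<open>E a b\<close> by (auto simp: connected_on_def)
  moreover have "connected_on E ({a, b} - {x})" if "x \<in> {a, b}" for x
    using that by (auto simp: connected_on_def)
  ultimately show ?thesis by (simp add: nonseparable_on_def)
qed

lemma edge_subset: "simple_graph V E \<Longrightarrow> E a b \<Longrightarrow> {a, b} \<subseteq> V"
  by (auto simp: simple_graph_def)

lemma block_subset: "simple_graph V E \<Longrightarrow> is_block V E B \<Longrightarrow> B \<subseteq> V"
  by (auto simp: is_block_def simple_graph_def)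

lemma block_nonseparable:
  assumes "simple_graph V E" and "is_block V E B"
  shows "nonseparable_on E B"
  using assms nonseparable_on_edge[OF assms(1)]
  by (auto simp: is_block_def two_connected_on_def nonseparable_on_def)

lemma two_le_card_block:
  assumes "simple_graph V E" and "is_block V E B"
  shows "2 \<le> card B"
proof -
  have "\<not> E u u" for u using assms(1) by (simp add: simple_graph_def)
  then show ?thesis
    using assms(2) unfolding is_block_def two_connected_on_def by (auto simp: card_insert_if)
qed

text \<open>For a block that is a bridge the hypotheses are contradictory.\<close>
lemma block_maximal:
  assumes "is_block V E B" and "B \<subseteq> S" and "S \<subseteq> V" and "two_connected_on E S"
  shows "S = B"
  using assms unfolding is_block_def by blast

lemma no_block_cycle:
  assumes sg: "simple_graph V E" and "2 \<le> n"
    and X: "\<And>a. a < n \<Longrightarrow> nonseparable_on E (X a)" and XV: "\<And>a. a < n \<Longrightarrow> X a \<subseteq> V"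
    and j: "\<And>a. a < n \<Longrightarrow> j a \<in> X a \<inter> X (Suc a mod n)" and "inj_on j {..<n}"
    and B0: "is_block V E (X 0)" and B1: "is_block V E (X 1)" and "X 0 \<noteq> X 1"
  shows False
proof -
  define U where "U = (\<Union>a<n. X a)"
  have "U \<subseteq> V" using XV unfolding U_def by auto
  then have "finite U" using sg finite_subset unfolding simple_graph_def by blast
  have "X 0 \<subseteq> U" "X 1 \<subseteq> U" using \<open>2 \<le> n\<close> unfolding U_def by (auto intro!: UN_upper)
  show False
  proof (cases "3 \<le> card U")
    case True
    have "nonseparable_on E U"
      unfolding U_def using \<open>2 \<le> n\<close> X j \<open>inj_on j {..<n}\<close> by (intro nonseparable_on_UN_cycle) auto
    then have "two_connected_on E U"
      using True \<open>finite U\<close> by (simp add: two_connected_on_def nonseparable_on_def)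
    then have "U = X 0" "U = X 1"
      using block_maximal[OF B0] block_maximal[OF B1] \<open>U \<subseteq> V\<close> \<open>X 0 \<subseteq> U\<close> \<open>X 1 \<subseteq> U\<close> by auto
    with \<open>X 0 \<noteq> X 1\<close> show False by simp
  next
    case False
    then have "X 0 = U" "X 1 = U"
      using two_le_card_block[OF sg B0] two_le_card_block[OF sg B1] \<open>X 0 \<subseteq> U\<close> \<open>X 1 \<subseteq> U\<close>
      by (simp_all add: card_seteq[OF \<open>finite U\<close>])
    with \<open>X 0 \<noteq> X 1\<close> show False by simp
  qed
qed

text \<open>X 0, j 0, X 1, ..., j (k - 1), X k: the blocks and shared vertices along a path in the
  block tree.\<close>
definition block_chain ::
    "'a set \<Rightarrow> ('a \<Rightarrow> 'a \<Rightarrow> bool) \<Rightarrow> nat \<Rightarrow> (nat \<Rightarrow> 'a set) \<Rightarrow> (nat \<Rightarrow> 'a) \<Rightarrow> bool" where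
  "block_chain V E k X j \<longleftrightarrow> 1 \<le> k \<and> (\<forall>i\<le>k. is_block V E (X i)) \<and> inj_on X {..k}
     \<and> inj_on j {..<k} \<and> (\<forall>i<k. j i \<in> X i \<and> j i \<in> X (Suc i))"

lemma block_chain_rev:
  assumes "block_chain V E k X j"
  shows "block_chain V E k (\<lambda>i. X (k - i)) (\<lambda>i. j (k - Suc i))"
proof -
  have "inj_on (\<lambda>i. X (k - i)) {..k}"
    using assms by (intro inj_onI) (auto simp: block_chain_def dest: inj_onD)
  moreover have "inj_on (\<lambda>i. j (k - Suc i)) {..<k}"
    using assms by (intro inj_onI) (auto simp: block_chain_def dest: inj_onD)
  moreover have "j (k - Suc i) \<in> X (k - i)" if "i < k" for i
  proof -
    have "k - Suc i < k" using that by simp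
    with assms have "j (k - Suc i) \<in> X (Suc (k - Suc i))" unfolding block_chain_def by blast
    then show ?thesis using Suc_diff_Suc[OF that] by simp
  qed
  ultimately show ?thesis
    using assms by (auto simp: block_chain_def)
qed

lemma block_chain_first_blocks_distinct:
  assumes "block_chain V E k X j"
  shows "X 0 \<noteq> X 1"
proof
  assume "X 0 = X 1"
  with assms have "0 = (1::nat)" unfolding block_chain_def by (auto dest: inj_onD)
  then show False by simp
qed

lemma inj_on_extend_distinct:
  assumes "inj_on j {..<m}" and "distinct ys" and "set ys \<inter> j ` {..<m} = {}"
  shows "inj_on (\<lambda>a. if a < m then j a else ys ! (a - m)) {..<m + length ys}"
proof (rule inj_onI)
  fix a b
  assume "a \<in> {..<m + length ys}" "b \<in> {..<m + length ys}"
    and eq: "(if a < m then j a else ys ! (a - m)) = (if b < m then j b else ys ! (b - m))"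
  have ys_a: "\<not> a < m \<Longrightarrow> ys ! (a - m) \<in> set ys" and ys_b: "\<not> b < m \<Longrightarrow> ys ! (b - m) \<in> set ys"
    using \<open>a \<in> {..<m + length ys}\<close> \<open>b \<in> {..<m + length ys}\<close> by simp_all
  show "a = b"
  proof (cases "a < m"; cases "b < m")
    assume "a < m" "b < m"
    then show ?thesis using eq \<open>inj_on j {..<m}\<close> by (simp add: inj_on_eq_iff)
  next
    assume "\<not> a < m" "\<not> b < m"
    then show ?thesis
      using eq \<open>distinct ys\<close> \<open>a \<in> {..<m + length ys}\<close> \<open>b \<in> {..<m + length ys}\<close>
      by (simp add: nth_eq_iff_index_eq)
  next
    assume "a < m" "\<not> b < m"
    then have "ys ! (b - m) = j a" using eq by simp
    moreover have "j a \<in> j ` {..<m}" using \<open>a < m\<close> by simp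
    ultimately show ?thesis using ys_b[OF \<open>\<not> b < m\<close>] assms(3) by (metis IntI empty_iff)
  next
    assume "\<not> a < m" "b < m"
    then have "ys ! (a - m) = j b" using eq by simp
    moreover have "j b \<in> j ` {..<m}" using \<open>b < m\<close> by simp
    ultimately show ?thesis using ys_a[OF \<open>\<not> a < m\<close>] assms(3) by (metis IntI empty_iff)
  qed
qed

text \<open>Closing the chain X 0, ..., X m by further nonseparable sets Ys, linked through the
  vertices ys, would create a cycle through the distinct blocks X 0 and X 1.\<close>
lemma block_chain_not_closable:
  assumes sg: "simple_graph V E" and ch: "block_chain V E k X j"
    and "1 \<le> m" "m \<le> k" and len: "length ys = Suc (length Ys)"
    and Ys: "\<And>Y. Y \<in> set Ys \<Longrightarrow> nonseparable_on E Y \<and> Y \<subseteq> V"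
    and links: "\<And>i. i < length Ys \<Longrightarrow> ys ! i \<in> Ys ! i \<and> ys ! Suc i \<in> Ys ! i"
    and "hd ys \<in> X m" and "last ys \<in> X 0"
    and "distinct ys" and disj: "set ys \<inter> j ` {..<m} = {}"
  shows False
proof -
  define n where "n = m + length ys"
  define X' where "X' a = (if a \<le> m then X a else Ys ! (a - Suc m))" for a
  define j' where "j' = (\<lambda>a. if a < m then j a else ys ! (a - m))"
  have blocks: "is_block V E (X i)" if "i \<le> m" for i
    using ch that \<open>m \<le> k\<close> by (simp add: block_chain_def)
  have junctions: "j i \<in> X i \<and> j i \<in> X (Suc i)" if "i < m" for i
    using ch that \<open>m \<le> k\<close> by (simp add: block_chain_def)
  have X': "nonseparable_on E (X' a) \<and> X' a \<subseteq> V" if "a < n" for a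
  proof (cases "a \<le> m")
    case True
    then show ?thesis using blocks block_nonseparable[OF sg] block_subset[OF sg] by (simp add: X'_def)
  next
    case False
    then have "Ys ! (a - Suc m) \<in> set Ys" using that len by (simp add: n_def)
    then show ?thesis using Ys False by (simp add: X'_def)
  qed
  have "ys \<noteq> []" using len by auto
  then have first: "ys ! 0 \<in> X m" and last: "ys ! length Ys \<in> X 0"
    using \<open>hd ys \<in> X m\<close> \<open>last ys \<in> X 0\<close> len by (auto simp: hd_conv_nth last_conv_nth)
  have j'_here: "j' a \<in> X' a" if "a < n" for a
  proof -
    consider "a < m" | "a = m" | "m < a" by linarith
    then show ?thesis
    proof cases
      case 3
      then have "a - Suc m < length Ys" "Suc (a - Suc m) = a - m" using that len by (auto simp: n_def)
      then show ?thesis using links[of "a - Suc m"] 3 by (simp add: X'_def j'_def)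
    qed (use junctions first in \<open>simp_all add: X'_def j'_def\<close>)
  qed
  have j'_next: "j' a \<in> X' (Suc a mod n)" if "a < n" for a
  proof -
    consider "a < m" | "m \<le> a" "Suc a < n" | "Suc a = n" using \<open>a < n\<close> by linarith
    then show ?thesis
    proof cases
      case 1
      then have "Suc a < n" using len by (simp add: n_def)
      then show ?thesis using junctions[OF 1] 1 by (simp add: X'_def j'_def)
    next
      case 2
      then have "a - m < length Ys" "Suc a - Suc m = a - m" using len by (auto simp: n_def)
      then show ?thesis using links 2 by (simp add: X'_def j'_def)
    next
      case 3
      then have "a - m = length Ys" "\<not> a < m" using \<open>1 \<le> m\<close> len by (auto simp: n_def)
      then show ?thesis using 3 last by (simp add: X'_def j'_def)
    qed
  qed
  have j'_in: "j' a \<in> X' a \<inter> X' (Suc a mod n)" if "a < n" for a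
    using j'_here[OF that] j'_next[OF that] by blast
  have "inj_on j {..<m}" using ch \<open>m \<le> k\<close> unfolding block_chain_def by (auto intro: inj_on_subset)
  then have "inj_on j' {..<n}"
    unfolding j'_def n_def using \<open>distinct ys\<close> disj by (rule inj_on_extend_distinct)
  moreover have "X 0 \<noteq> X 1" using block_chain_first_blocks_distinct[OF ch] .
  ultimately show False
  proof (intro no_block_cycle[OF sg, of n X' j'])
    show "2 \<le> n" using \<open>1 \<le> m\<close> len by (simp add: n_def)
  qed (use X' j'_in blocks \<open>1 \<le> m\<close> in \<open>simp_all add: X'_def\<close>)
qed

lemma block_chain_junction_notin_first:
  assumes sg: "simple_graph V E" and ch: "block_chain V E k X j" and "1 \<le> i" "i < k"
  shows "j i \<notin> X 0"
proof
  assume "j i \<in> X 0"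
  have "j i \<in> X i" using ch \<open>i < k\<close> by (simp add: block_chain_def)
  moreover have "j i \<notin> j ` {..<i}"
    using ch \<open>i < k\<close> unfolding block_chain_def by (auto dest: inj_onD)
  ultimately show False
    using block_chain_not_closable[OF sg ch \<open>1 \<le> i\<close>, of "[j i]" "[]"] \<open>j i \<in> X 0\<close> \<open>i < k\<close>
    by simp
qed

text \<open>The vertices w and w' witness that (X 0, j 0) and (X k, j (k - 1)) are directed holes.\<close>
definition hallway_chain ::
    "'a set \<Rightarrow> ('a \<Rightarrow> 'a \<Rightarrow> bool) \<Rightarrow> nat \<Rightarrow> (nat \<Rightarrow> 'a set) \<Rightarrow> (nat \<Rightarrow> 'a) \<Rightarrow> 'a \<Rightarrow> 'a \<Rightarrow> bool" where
  "hallway_chain V E k X j w w' \<longleftrightarrow> block_chain V E k X j \<and>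
     w \<in> X 0 \<and> w \<noteq> j 0 \<and> \<not> E (j 0) w \<and> w' \<in> X k \<and> w' \<noteq> j (k - 1) \<and> \<not> E (j (k - 1)) w'"

lemma hallway_chain_rev:
  assumes "hallway_chain V E k X j w w'"
  shows "hallway_chain V E k (\<lambda>i. X (k - i)) (\<lambda>i. j (k - Suc i)) w' w"
  using assms block_chain_rev[of V E k X j] by (auto simp: hallway_chain_def block_chain_def)

lemma hallway_chain_start_not_junction:
  assumes sg: "simple_graph V E" and hc: "hallway_chain V E k X j w w'" and "a < k"
  shows "w \<noteq> j a"
  using hc block_chain_junction_notin_first[OF sg, of k X j a] \<open>a < k\<close>
  by (cases "a = 0") (auto simp: hallway_chain_def)

lemma hallway_chain_end_not_junction:
  assumes sg: "simple_graph V E" and hc: "hallway_chain V E k X j w w'" and "a < k"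
  shows "w' \<noteq> j a"
proof -
  have "k - Suc (k - Suc a) = a" using \<open>a < k\<close> by simp
  then show ?thesis
    using hallway_chain_start_not_junction[OF sg hallway_chain_rev[OF hc], of "k - Suc a"] \<open>a < k\<close>
    by simp
qed

lemma hallway_chain_ends_distinct:
  assumes sg: "simple_graph V E" and hc: "hallway_chain V E k X j w w'"
  shows "w \<noteq> w'"
proof
  assume "w = w'"
  have ch: "block_chain V E k X j" and "1 \<le> k" using hc by (auto simp: hallway_chain_def block_chain_def)
  moreover have "w \<notin> j ` {..<k}" using hallway_chain_start_not_junction[OF sg hc] by auto
  ultimately show False
    using block_chain_not_closable[OF sg ch \<open>1 \<le> k\<close> order_refl, of "[w]" "[]"] hc \<open>w = w'\<close>
    by (simp add: hallway_chain_def)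
qed

lemma hallway_chain_start_neighbour:
  assumes sg: "simple_graph V E" and hc: "hallway_chain V E k X j w w'" and "E w c"
  shows "c \<noteq> w'" and "a < k \<Longrightarrow> c \<noteq> j a"
proof -
  have ch: "block_chain V E k X j" and "1 \<le> k" using hc by (auto simp: hallway_chain_def block_chain_def)
  have "E c w" "c \<noteq> w" using sg \<open>E w c\<close> by (auto simp: simple_graph_def)
  have edge: "nonseparable_on E {c, w} \<and> {c, w} \<subseteq> V"
    using nonseparable_on_edge[OF sg \<open>E c w\<close>] edge_subset[OF sg \<open>E c w\<close>] by simp
  have w_off: "w \<notin> j ` {..<m}" if "m \<le> k" for m
    using hallway_chain_start_not_junction[OF sg hc] that by (metis imageE lessThan_iff order_less_le_trans)
  show "c \<noteq> w'"
  proof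
    assume "c = w'"
    moreover have "c \<notin> j ` {..<k}" using hallway_chain_end_not_junction[OF sg hc] \<open>c = w'\<close> by auto
    ultimately show False
      using block_chain_not_closable[OF sg ch \<open>1 \<le> k\<close> order_refl, of "[c, w]" "[{c, w}]"]
        edge w_off[of k] \<open>c \<noteq> w\<close> hc by (auto simp: hallway_chain_def)
  qed
  show "c \<noteq> j a" if "a < k"
  proof
    assume "c = j a"
    then have "a \<noteq> 0" using hc \<open>E c w\<close> by (cases a) (auto simp: hallway_chain_def)
    have "c \<in> X a" using ch \<open>c = j a\<close> \<open>a < k\<close> by (simp add: block_chain_def)
    moreover have "c \<notin> j ` {..<a}"
      using ch \<open>c = j a\<close> \<open>a < k\<close> unfolding block_chain_def by (auto dest: inj_onD)
    ultimately show False
      using block_chain_not_closable[OF sg ch _ _, of a "[c, w]" "[{c, w}]"]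
        edge w_off[of a] \<open>c \<noteq> w\<close> \<open>a \<noteq> 0\<close> \<open>a < k\<close> hc by (auto simp: hallway_chain_def)
  qed
qed

lemma hallway_chain_no_common_neighbour:
  assumes sg: "simple_graph V E" and hc: "hallway_chain V E k X j w w'" and "E w c" and "E w' c"
  shows False
proof -
  have ch: "block_chain V E k X j" and "1 \<le> k" using hc by (auto simp: hallway_chain_def block_chain_def)
  have "E c w" "c \<noteq> w" "c \<noteq> w'" using sg \<open>E w c\<close> \<open>E w' c\<close> by (auto simp: simple_graph_def)
  have edges: "nonseparable_on E Y \<and> Y \<subseteq> V" if "Y \<in> {{w', c}, {c, w}}" for Y
    using that nonseparable_on_edge[OF sg] edge_subset[OF sg] \<open>E w' c\<close> \<open>E c w\<close> by auto
  have "set [w', c, w] \<inter> j ` {..<k} = {}"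
    using hallway_chain_start_not_junction[OF sg hc] hallway_chain_end_not_junction[OF sg hc]
      hallway_chain_start_neighbour(2)[OF sg hc \<open>E w c\<close>] by auto
  then show False
  proof (intro block_chain_not_closable[OF sg ch \<open>1 \<le> k\<close> order_refl, of "[w', c, w]" "[{w', c}, {c, w}]"])
    show "i < length [{w', c}, {c, w}] \<Longrightarrow>
        [w', c, w] ! i \<in> [{w', c}, {c, w}] ! i \<and> [w', c, w] ! Suc i \<in> [{w', c}, {c, w}] ! i" for i
      by (cases i) auto
  qed (use edges hallway_chain_ends_distinct[OF sg hc] \<open>c \<noteq> w\<close> \<open>c \<noteq> w'\<close> hc
      in \<open>auto simp: hallway_chain_def\<close>)
qed

lemma hallway_chain_closed_neighbourhoods_disjoint:
  assumes sg: "simple_graph V E" and hc: "hallway_chain V E k X j w w'"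
    and "c = w \<or> E w c" and "c = w' \<or> E w' c"
  shows False
proof -
  have sym: "E x y \<Longrightarrow> E y x" for x y using sg by (simp add: simple_graph_def)
  show False
    using assms(3,4) hallway_chain_ends_distinct[OF sg hc] hallway_chain_no_common_neighbour[OF sg hc]
      hallway_chain_start_neighbour(1)[OF sg hc, of w'] sym[of w' w]
    by blast
qed

text \<open>A neighbour c of w avoids all junctions, so w and the junctions are linked through the
  blocks with c deleted, which stay connected.\<close>
lemma hallway_chain_escape:
  assumes sg: "simple_graph V E" and hc: "hallway_chain V E k X j w w'" and "E w c"
  shows "robber_move E [c] w w'"
proof -
  let ?avoid_c = "\<lambda>a b. E a b \<and> a \<notin> set [c] \<and> b \<notin> set [c]"
  have ch: "block_chain V E k X j" using hc by (simp add: hallway_chain_def)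
  have "c \<noteq> w" using sg \<open>E w c\<close> by (auto simp: simple_graph_def)
  have connected: "connected_on E (X i - {c})" if "i \<le> k" for i
    using ch that by (simp add: block_chain_def block_nonseparable[OF sg] nonseparable_on_connected_minus)
  have "\<forall>x\<in>X i - {c}. ?avoid_c\<^sup>*\<^sup>* w x" if "i \<le> k" for i
    using that
  proof (induction i)
    case 0
    then show ?case
      using connected[of 0] hc \<open>c \<noteq> w\<close> connected_on_rtranclp[of E "X 0 - {c}" w]
      by (simp add: hallway_chain_def)
  next
    case (Suc i)
    then have "i < k" by simp
    have "j i \<noteq> c" using hallway_chain_start_neighbour(2)[OF sg hc \<open>E w c\<close> \<open>i < k\<close>] by simp
    moreover have "j i \<in> X i" "j i \<in> X (Suc i)" using ch \<open>i < k\<close> by (simp_all add: block_chain_def)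
    ultimately have "?avoid_c\<^sup>*\<^sup>* w (j i)" using Suc by simp
    moreover have "?avoid_c\<^sup>*\<^sup>* (j i) x" if "x \<in> X (Suc i) - {c}" for x
      using connected[OF Suc.prems] connected_on_rtranclp[of E "X (Suc i) - {c}" "j i" x]
        \<open>j i \<in> X (Suc i)\<close> \<open>j i \<noteq> c\<close> that by simp
    ultimately show ?case by (blast intro: rtranclp_trans)
  qed
  then show ?thesis
    using hc hallway_chain_start_neighbour(1)[OF sg hc \<open>E w c\<close>]
    by (auto simp: robber_move_def hallway_chain_def)
qed

lemma bt_path_isl_nth:
  assumes "bt_path V E p" and "isl (hd p)" and "i < length p"
  shows "isl (p ! i) \<longleftrightarrow> even i"
  using \<open>i < length p\<close>
proof (induction i)
  case 0
  then show ?case using assms(1,2) by (simp add: bt_path_def hd_conv_nth)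
next
  case (Suc i)
  then have "bt_adj V E (p ! i) (p ! Suc i)" using assms(1) by (simp add: bt_path_def)
  then show ?case using Suc by (auto simp: bt_adj_def)
qed

lemma bt_path_block_chain:
  assumes bp: "bt_path V E p" and hd: "hd p = Inl B" and last: "last p = Inl B'" and "B \<noteq> B'"
  defines "k \<equiv> (length p - 1) div 2"
  shows "length p = 2 * k + 1"
    and "block_chain V E k (\<lambda>i. projl (p ! (2 * i))) (\<lambda>i. projr (p ! (2 * i + 1)))"
proof -
  define X where "X i = projl (p ! (2 * i))" for i
  define j where "j i = projr (p ! (2 * i + 1))" for i
  have "p \<noteq> []" and "distinct p" and adj: "\<And>i. Suc i < length p \<Longrightarrow> bt_adj V E (p ! i) (p ! Suc i)"
    using bp by (auto simp: bt_path_def)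
  have parity: "isl (p ! i) \<longleftrightarrow> even i" if "i < length p" for i
    using bt_path_isl_nth[OF bp _ that] hd by simp
  have "p ! (length p - 1) = Inl B'" using last \<open>p \<noteq> []\<close> by (simp add: last_conv_nth)
  then show len: "length p = 2 * k + 1"
    using parity[of "length p - 1"] \<open>p \<noteq> []\<close> unfolding k_def by auto
  have "length p \<noteq> 1" using hd last \<open>B \<noteq> B'\<close> \<open>p \<noteq> []\<close> by (auto simp: hd_conv_nth last_conv_nth)
  then have "1 \<le> k" using len by simp
  have pX: "p ! (2 * i) = Inl (X i)" if "i \<le> k" for i
    using parity[of "2 * i"] that len by (simp add: X_def)
  have pj: "p ! (2 * i + 1) = Inr (j i)" if "i < k" for i
    using parity[of "2 * i + 1"] that len by (cases "p ! (2 * i + 1)") (simp_all add: j_def)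
  have left: "is_block V E (X i) \<and> j i \<in> X i" if "i < k" for i
    using adj[of "2 * i"] pX[of i] pj[of i] that len by (auto simp: bt_adj_def)
  have right: "is_block V E (X (Suc i)) \<and> j i \<in> X (Suc i)" if "i < k" for i
    using adj[of "2 * i + 1"] pX[of "Suc i"] pj[of i] that len by (auto simp: bt_adj_def)
  have "is_block V E (X i)" if "i \<le> k" for i
    using left right[of "i - 1"] that \<open>1 \<le> k\<close> by (cases "i < k") auto
  moreover have "inj_on X {..k}"
  proof (rule inj_onI)
    fix a b assume "a \<in> {..k}" "b \<in> {..k}" "X a = X b"
    then have "p ! (2 * a) = p ! (2 * b)" "2 * a < length p" "2 * b < length p" using pX len by auto
    then show "a = b" using \<open>distinct p\<close> by (simp add: nth_eq_iff_index_eq)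
  qed
  moreover have "inj_on j {..<k}"
  proof (rule inj_onI)
    fix a b assume "a \<in> {..<k}" "b \<in> {..<k}" "j a = j b"
    then have "p ! (2 * a + 1) = p ! (2 * b + 1)" "2 * a + 1 < length p" "2 * b + 1 < length p"
      using pj len by auto
    then show "a = b" using \<open>distinct p\<close> by (simp add: nth_eq_iff_index_eq)
  qed
  ultimately show "block_chain V E k (\<lambda>i. projl (p ! (2 * i))) (\<lambda>i. projr (p ! (2 * i + 1)))"
    using left right \<open>1 \<le> k\<close> unfolding block_chain_def X_def j_def by blast
qed

lemma hallway_chain_of_hallway:
  assumes "is_hallway V E B B'"
  obtains k X j w w' where "hallway_chain V E k X j w w'"
proof -
  from assms obtain p u1 uk where bp: "bt_path V E p" and hd: "hd p = Inl B" and last: "last p = Inl B'"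
    and p1: "p ! 1 = Inr u1" and p2: "p ! (length p - 2) = Inr uk" and "B \<noteq> B'"
    and hole1: "directed_hole V E B u1" and hole2: "directed_hole V E B' uk"
    unfolding is_hallway_def by blast
  define k where "k = (length p - 1) div 2"
  note chain = bt_path_block_chain[OF bp hd last \<open>B \<noteq> B'\<close>, folded k_def]
  have "1 \<le> k" and "p \<noteq> []" using chain(2) bp by (auto simp: block_chain_def bt_path_def)
  have ends: "projl (p ! (2 * 0)) = B" "projl (p ! (2 * k)) = B'"
    using hd last chain(1) \<open>p \<noteq> []\<close> by (simp_all add: hd_conv_nth last_conv_nth)
  have "2 * (k - 1) + 1 = length p - 2" using chain(1) \<open>1 \<le> k\<close> by simp
  then have junctions: "projr (p ! (2 * 0 + 1)) = u1" "projr (p ! (2 * (k - 1) + 1)) = uk"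
    using p1 p2 by simp_all
  from hole1 obtain w where "w \<in> B" "w \<noteq> u1" "\<not> E u1 w" unfolding directed_hole_def by blast
  moreover from hole2 obtain w' where "w' \<in> B'" "w' \<noteq> uk" "\<not> E uk w'" unfolding directed_hole_def by blast
  ultimately show thesis
    using that[unfolded hallway_chain_def, OF conjI[OF chain(2)]] ends junctions by simp
qed

lemma cop_move_single: "cop_move E [c] C' \<Longrightarrow> \<exists>c'. C' = [c'] \<and> (c' = c \<or> E c c')"
  unfolding cop_move_def by (cases C') auto

lemma not_cops_win_one:
  assumes "w \<in> V" and "w' \<in> V" and sym: "\<And>x y. E x y \<Longrightarrow> E y x"
    and disjoint: "\<And>c. c = w \<or> E w c \<Longrightarrow> c = w' \<or> E w' c \<Longrightarrow> False"
    and escape: "\<And>c. E w c \<Longrightarrow> robber_move E [c] w w'" "\<And>c. E w' c \<Longrightarrow> robber_move E [c] w' w"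
  shows "\<not> cops_win V E 1"
proof -
  text \<open>Against a cop at c \<noteq> r, the robber at r \<in> {w, w'} moves to a vertex of {w, w'} outside the
    closed neighbourhood of c, so the cop's next move cannot reach her.\<close>
  have safe: "\<exists>r'\<in>{w, w'}. robber_move E [c] r r' \<and> r' \<noteq> c \<and> \<not> E r' c"
    if "r \<in> {w, w'}" and "c \<noteq> r" for r c
  proof (cases "E r c")
    case False
    then show ?thesis using that by (auto simp: robber_move_def)
  next
    case True
    then show ?thesis using that escape disjoint[of c] sym by blast
  qed
  have robber_survives: "\<not> cop_wins_from E C r" if "C = [c]" "r \<in> {w, w'}" "c \<noteq> r" for C c r
  proof
    assume "cop_wins_from E C r"
    then show False
      using that
    proof (induction arbitrary: c rule: cop_wins_from.induct)
      case (step C r)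
      obtain r' where r': "r' \<in> {w, w'}" "robber_move E [c] r r'" "r' \<noteq> c" "\<not> E r' c"
        using safe[OF step.prems(2,3)] by blast
      then obtain C' where "cop_move E [c] C'" and cop_step: "r' \<in> set C' \<or> cop_wins_from E C' r' \<and>
          (\<forall>c'. C' = [c'] \<longrightarrow> r' \<in> {w, w'} \<longrightarrow> c' \<noteq> r' \<longrightarrow> False)"
        using step.IH step.prems(1) by blast
      then obtain c' where "C' = [c']" "c' = c \<or> E c c'" by (blast dest: cop_move_single)
      then show False using cop_step r' sym by auto
    qed
  qed
  show ?thesis
  proof
    assume "cops_win V E 1"
    then obtain c where win: "\<forall>r\<in>V - {c}. \<exists>C'. cop_move E [c] C' \<and> (r \<in> set C' \<or> cop_wins_from E C' r)"
      unfolding cops_win_def by (auto simp: length_Suc_conv)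
    obtain r where "r \<in> {w, w'}" "r \<noteq> c" "\<not> E r c" using disjoint[of c] sym by blast
    then obtain C' where "cop_move E [c] C'" and "r \<in> set C' \<or> cop_wins_from E C' r"
      using win \<open>w \<in> V\<close> \<open>w' \<in> V\<close> by blast
    moreover obtain c' where "C' = [c']" "c' = c \<or> E c c'"
      using cop_move_single[OF \<open>cop_move E [c] C'\<close>] by blast
    ultimately show False using robber_survives[of C' c' r] \<open>r \<in> {w, w'}\<close> \<open>r \<noteq> c\<close> \<open>\<not> E r c\<close> sym by auto
  qed
qed

lemma cops_win_card:
  assumes "simple_graph V E"
  shows "cops_win V E (card V)"
proof -
  have "finite V" using assms by (simp add: simple_graph_def)
  then obtain xs where "set xs = V" "distinct xs" using finite_distinct_list by blast
  then show ?thesis unfolding cops_win_def by (intro exI[of _ xs]) (auto simp: distinct_card)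
qed

lemma cops_win_cop_number_inf:
  assumes "simple_graph V E"
  shows "cops_win V E (cop_number_inf V E)"
  unfolding cop_number_inf_def using cops_win_card[OF assms] by (rule LeastI)

theorem mainTheorem10:
  fixes V :: "'a set" and E :: "'a \<Rightarrow> 'a \<Rightarrow> bool"
  assumes "simple_graph V E"
    and "connected_graph V E"
    and "cop_number_inf V E = 1"
  shows "\<not> has_hallway V E"
proof
  assume "has_hallway V E"
  then obtain k X j w w' where hc: "hallway_chain V E k X j w w'"
    unfolding has_hallway_def by (blast elim: hallway_chain_of_hallway)
  then have "w \<in> X 0" "w' \<in> X k" and "is_block V E (X 0)" "is_block V E (X k)"
    by (simp_all add: hallway_chain_def block_chain_def)
  then have "w \<in> V" "w' \<in> V" using block_subset[OF assms(1)] by blast+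
  have "\<not> cops_win V E 1"
  proof (rule not_cops_win_one[OF \<open>w \<in> V\<close> \<open>w' \<in> V\<close>])
    show "E y x" if "E x y" for x y using assms(1) that by (simp add: simple_graph_def)
    show "False" if "c = w \<or> E w c" "c = w' \<or> E w' c" for c
      using hallway_chain_closed_neighbourhoods_disjoint[OF assms(1) hc that] .
    show "robber_move E [c] w w'" if "E w c" for c
      using hallway_chain_escape[OF assms(1) hc that] .
    show "robber_move E [c] w' w" if "E w' c" for c
      using hallway_chain_escape[OF assms(1) hallway_chain_rev[OF hc] that] .
  qed
  moreover have "cops_win V E 1" using cops_win_cop_number_inf[OF assms(1)] assms(3) by simp
  ultimately show False by contradiction
qed

end
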